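(* Let $\sigma>0$ and define the even function $k:\mathbb{R}\to\mathbb{R}$ by \[ k(r)=\operatorname{erfc}\!\left(\frac{r}{\sigma\sqrt{2}}\right)-\frac{1}{\sqrt{\pi}}\left(\frac{r}{\sigma\sqrt{2}}\right)E_1\!\left(\frac{r^2}{2\sigma^2}\right)\quad (r>0),\qquad k(0)=1,\qquad k(-r)=k(r), \] where $\operatorname{erfc}(x)=1-\frac{1}{\sqrt{\pi}}\int_{-x}^{x}e^{-s^2}ds$ and $E_1(z)=\int_z^\infty \frac{e^{-s}}{s}\,ds$. Then for $t\neq 0$, \[ \mathcal{F}[k](t)=\int_{-\infty}^{\infty}k(r)e^{\mathbf{i} rt}\,dr=\frac{2}{t\sqrt{\pi}}\int_0^{\infty}E_1(r^2)\sin(\sigma\sqrt{2}\,t r)\,dr. \]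
   Context: This $k$ is the kernel $k(r)=\int_0^\infty\max\{0,1-|r|/x\}\,dF(x)$ associated with the half-normal distribution with scale $\sigma$ (density $\frac{\sqrt2}{\sigma\sqrt\pi}e^{-x^2/(2\sigma^2)}$ on $(0,\infty)$). *)

theory Defs
  imports "HOL-Analysis.Analysis"
begin

definition erfc :: "real \<Rightarrow> real" where
  "erfc x = 1 - 1 / sqrt pi * (LBINT s=ereal (-x)..ereal x. exp (-(s\<^sup>2)))"

definition E1 :: "real \<Rightarrow> real" where
  "E1 z = (LBINT s=ereal z..\<infinity>. exp (-s) / s)"

definition kern :: "real \<Rightarrow> real \<Rightarrow> real" where
  "kern \<sigma> r = (if r = 0 then 1 else
     erfc (\<bar>r\<bar> / (\<sigma> * sqrt 2))
     - 1 / sqrt pi * (\<bar>r\<bar> / (\<sigma> * sqrt 2)) * E1 (r\<^sup>2 / (2 * \<sigma>\<^sup>2)))"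

definition fourier :: "(real \<Rightarrow> real) \<Rightarrow> real \<Rightarrow> complex" where
  "fourier f t = (LINT r|lborel. complex_of_real (f r) * cis (r * t))"

end

theory Submission
  imports Defs "HOL-Probability.Distributions" "HOL-Real_Asymp.Real_Asymp"
begin

text \<open>For \<open>r > 0\<close> the kernel is \<open>k(r) = K(r / (\<sigma> sqrt 2))\<close> with
  \<open>K(u) = erfc u - u E1(u\<^sup>2) / sqrt pi\<close>. The Gaussian terms in the derivative of \<open>K\<close> cancel,
  so \<open>K' u = - E1(u\<^sup>2) / sqrt pi\<close>; moreover \<open>K(0\<^sup>+) = 1\<close>, \<open>K \<ge> 0\<close>, and \<open>K\<close> decays like
  \<open>exp(-u\<^sup>2) / u\<close>. As \<open>k\<close> is even and integrable, its Fourier transform is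
  \<open>2 \<integral>\<^sub>0\<^sup>\<infinity> k(r) cos(r t) dr = 2 \<sigma> sqrt 2 \<integral>\<^sub>0\<^sup>\<infinity> K(u) cos(b u) du\<close> with \<open>b = \<sigma> sqrt 2 t\<close>, and
  integrating by parts against \<open>sin(b u) / b\<close>, whose boundary terms vanish, gives the sine
  integral of \<open>E1(u\<^sup>2)\<close>.\<close>

section \<open>Integrals on the half-line\<close>

lemma set_integrable_mult_bounded:
  fixes f g :: "real \<Rightarrow> real"
  assumes f: "set_integrable lborel A f" and g: "continuous_on UNIV g" and bound: "\<And>x. \<bar>g x\<bar> \<le> 1"
  shows "set_integrable lborel A (\<lambda>x. f x * g x)"
proof (rule set_integrable_bound[OF f])
  have "(\<lambda>x. indicator A x *\<^sub>R f x) \<in> borel_measurable lborel"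
    using f unfolding set_integrable_def by (rule borel_measurable_integrable)
  moreover have "g \<in> borel_measurable lborel"
    using borel_measurable_continuous_onI[OF g] by simp
  ultimately have "(\<lambda>x. (indicator A x *\<^sub>R f x) * g x) \<in> borel_measurable lborel"
    by (rule borel_measurable_times)
  then show "set_borel_measurable lborel A (\<lambda>x. f x * g x)"
    by (simp add: set_borel_measurable_def mult.assoc)
  show "AE x in lborel. x \<in> A \<longrightarrow> norm (f x * g x) \<le> norm (f x)"
    using bound by (intro AE_I2) (simp add: abs_mult mult_left_le)
qed

lemma set_integral_Ioi_scale:
  fixes h :: "real \<Rightarrow> real"
  assumes "0 < a"
  shows "set_integrable lborel {0<..} (\<lambda>r. h (r / a)) \<longleftrightarrow> set_integrable lborel {0<..} h"
    and "(LINT r:{0<..}|lborel. h (r / a)) = a * (LINT u:{0<..}|lborel. h u)"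
proof -
  define g where "g r = indicator {0<..} r *\<^sub>R h (r / a)" for r
  have g_scaled: "(\<lambda>u. g (0 + a * u)) = (\<lambda>u. indicator {0<..} u *\<^sub>R h u)"
    using assms by (auto simp: g_def indicator_def zero_less_mult_iff)
  have "integrable lborel (\<lambda>u. g (0 + a * u)) \<longleftrightarrow> integrable lborel g"
    using assms by (intro lborel_integrable_real_affine_iff) simp
  then show "set_integrable lborel {0<..} (\<lambda>r. h (r / a)) \<longleftrightarrow> set_integrable lborel {0<..} h"
    unfolding g_scaled by (simp add: set_integrable_def g_def[abs_def])
  have "(LINT r|lborel. g r) = \<bar>a\<bar> *\<^sub>R (LINT u|lborel. g (0 + a * u))"
    using assms by (intro lborel_integral_real_affine) simp
  then show "(LINT r:{0<..}|lborel. h (r / a)) = a * (LINT u:{0<..}|lborel. h u)"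
    using assms unfolding g_scaled by (simp add: set_lebesgue_integral_def g_def[abs_def])
qed

lemma integrable_mult_cis:
  fixes g :: "real \<Rightarrow> real"
  assumes "integrable lborel g"
  shows "integrable lborel (\<lambda>r. complex_of_real (g r) * cis (r * s))"
proof (rule Bochner_Integration.integrable_bound[OF assms])
  have "(\<lambda>r. complex_of_real (g r)) \<in> borel_measurable lborel"
    using borel_measurable_integrable[OF assms] by simp
  moreover have "(\<lambda>r. cis (r * s)) \<in> borel_measurable lborel"
    using borel_measurable_continuous_onI[of "\<lambda>r. cis (r * s)"] by (simp add: continuous_intros)
  ultimately show "(\<lambda>r. complex_of_real (g r) * cis (r * s)) \<in> borel_measurable lborel"
    by (rule borel_measurable_times)
  show "AE r in lborel. norm (complex_of_real (g r) * cis (r * s)) \<le> norm (g r)"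
    by (simp add: norm_mult)
qed

lemma fourier_even:
  fixes f :: "real \<Rightarrow> real"
  assumes int: "set_integrable lborel {0<..} f" and even: "\<And>r. f (-r) = f r"
  shows "fourier f t = complex_of_real (2 * (LINT r:{0<..}|lborel. f r * cos (r * t)))"
proof -
  define g where "g r = indicator {0<..} r * f r" for r
  have "integrable lborel g"
    using int by (simp add: set_integrable_def g_def[abs_def])
  then have g_cis: "integrable lborel (\<lambda>r. complex_of_real (g r) * cis (r * s))" for s
    by (rule integrable_mult_cis)
  have reflect: "(LINT r|lborel. h (-r)) = (LINT r|lborel. h r)" for h :: "real \<Rightarrow> complex"
    using lborel_integral_real_affine[of "-1" h 0] by simp
  have g_reflected_cis: "integrable lborel (\<lambda>r. complex_of_real (g (-r)) * cis (r * t))"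
    using lborel_integrable_real_affine_iff[of "-1" "\<lambda>r. complex_of_real (g r) * cis (r * (-t))" 0]
      g_cis[of "-t"] by simp
  have "fourier f t = (LINT r|lborel. complex_of_real (g r) * cis (r * t) + complex_of_real (g (-r)) * cis (r * t))"
    unfolding fourier_def
  proof (rule integral_discrete_difference[where X="{0}"])
    fix r :: real
    assume "r \<notin> {0}"
    then have "f r = g r + g (-r)"
      using even[of r] by (auto simp: g_def indicator_def)
    then show "complex_of_real (f r) * cis (r * t)
        = complex_of_real (g r) * cis (r * t) + complex_of_real (g (-r)) * cis (r * t)"
      by (simp add: distrib_right)
  qed auto
  also have "\<dots> = (LINT r|lborel. complex_of_real (g r) * cis (r * t))
      + (LINT r|lborel. complex_of_real (g r) * cis (r * (-t)))"
    using g_cis[of t] g_reflected_cis reflect[of "\<lambda>r. complex_of_real (g r) * cis (r * (-t))"] by simp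
  also have "\<dots> = (LINT r|lborel. complex_of_real (g r) * cis (r * t) + complex_of_real (g r) * cis (r * (-t)))"
    by (rule Bochner_Integration.integral_add[symmetric, OF g_cis g_cis])
  also have "\<dots> = (LINT r|lborel. complex_of_real (2 * (g r * cos (r * t))))"
    by (rule Bochner_Integration.integral_cong) (auto simp: complex_eq_iff)
  also have "\<dots> = complex_of_real (LINT r|lborel. 2 * (g r * cos (r * t)))"
    by (rule integral_complex_of_real)
  finally show ?thesis
    by (simp add: g_def set_lebesgue_integral_def mult.assoc)
qed

section \<open>The exponential integral\<close>

lemma
  fixes z :: real
  shows exp_neg_integrable_Ioi: "set_integrable lborel {z<..} (\<lambda>s. exp (-s))"
    and exp_neg_integral_Ioi: "(LINT s:{z<..}|lborel. exp (-s)) = exp (-z)"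
proof -
  have lim_z: "(((\<lambda>s. - exp (-s)) \<circ> real_of_ereal) \<longlongrightarrow> - exp (-z)) (at_right (ereal z))"
    unfolding ereal_tendsto_simps1 by (intro tendsto_intros)
  have lim_inf: "(((\<lambda>s. - exp (-s)) \<circ> real_of_ereal) \<longlongrightarrow> 0) (at_left \<infinity>)"
    unfolding ereal_tendsto_simps1 by real_asymp
  note FTC = interval_integral_FTC_nonneg[where f="\<lambda>s. exp (-s)", OF _ _ _ _ lim_z lim_inf]
  have "set_integrable lborel (einterval z \<infinity>) (\<lambda>s. exp (-s))"
    by (rule FTC(1)) (auto intro!: derivative_eq_intros)
  then show "set_integrable lborel {z<..} (\<lambda>s. exp (-s))" by simp
  have "(LBINT s=ereal z..\<infinity>. exp (-s)) = 0 - (- exp (-z))"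
    by (rule FTC(2)) (auto intro!: derivative_eq_intros)
  then show "(LINT s:{z<..}|lborel. exp (-s)) = exp (-z)"
    by (simp add: interval_integral_to_infinity_eq)
qed

lemma E1_eq_set_integral: "E1 z = (LINT s:{z<..}|lborel. exp (-s) / s)"
  by (simp add: E1_def interval_integral_to_infinity_eq)

lemma E1_integrable: "0 < z \<Longrightarrow> set_integrable lborel {z<..} (\<lambda>s::real. exp (-s) / s)"
proof (rule set_integrable_bound[where f="\<lambda>s. exp (-s) / z"])
  assume "0 < z"
  show "set_integrable lborel {z<..} (\<lambda>s. exp (-s) / z)"
    using exp_neg_integrable_Ioi[of z] by (simp add: set_integrable_divide)
  show "set_borel_measurable lborel {z<..} (\<lambda>s. exp (-s) / s)"
    unfolding set_borel_measurable_def by measurable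
  show "AE s in lborel. s \<in> {z<..} \<longrightarrow> norm (exp (-s) / s) \<le> norm (exp (-s) / z)"
    using \<open>0 < z\<close> by (auto intro!: AE_I2 frac_le)
qed

lemma E1_nonneg: "0 < z \<Longrightarrow> 0 \<le> E1 z"
  unfolding E1_eq_set_integral set_lebesgue_integral_def
  by (intro integral_nonneg_AE AE_I2) (auto split: split_indicator)

lemma E1_le: "0 < z \<Longrightarrow> E1 z \<le> exp (-z) / z"
proof -
  assume z: "0 < z"
  have "E1 z \<le> (LINT s:{z<..}|lborel. exp (-s) / z)"
    unfolding E1_eq_set_integral using z E1_integrable[OF z] exp_neg_integrable_Ioi[of z]
    by (intro set_integral_mono) (auto intro!: divide_left_mono simp: set_integrable_divide)
  then show ?thesis by (simp add: exp_neg_integral_Ioi)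
qed

lemma E1_eq_E1_1_minus: "0 < z \<Longrightarrow> E1 z = E1 1 - (LBINT s=ereal 1..ereal z. exp (-s) / s)"
proof -
  assume z: "0 < z"
  have "interval_lebesgue_integrable lborel (min (ereal z) (min (ereal 1) \<infinity>))
      (max (ereal z) (max (ereal 1) \<infinity>)) (\<lambda>s. exp (-s) / s)"
    using E1_integrable[OF z] E1_integrable[OF zero_less_one]
    by (auto simp: interval_integrable_to_infinity_eq min_def)
  from interval_integral_sum[OF this] show ?thesis
    unfolding E1_def by (subst (asm) interval_integral_endpoints_reverse) simp
qed

lemma E1_has_derivative: "0 < z \<Longrightarrow> (E1 has_real_derivative - (exp (-z) / z)) (at z)"
proof -
  assume z: "0 < z"
  define a where "a = min 1 (z/2)"
  define b where "b = max 1 (z+1)"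
  have ab: "0 < a" "a \<le> 1" "1 \<le> b" "a < z" "z < b" using z by (auto simp: a_def b_def)
  have "((\<lambda>u. LBINT s=ereal 1..ereal u. exp (-s) / s) has_vector_derivative exp (-z) / z)
      (at z within {a..b})"
    using ab by (intro interval_integral_FTC2) (auto intro!: continuous_intros)
  then have "((\<lambda>u. LBINT s=ereal 1..ereal u. exp (-s) / s) has_real_derivative exp (-z) / z) (at z)"
    using ab by (simp add: at_within_Icc_at has_real_derivative_iff_has_vector_derivative)
  then have deriv: "((\<lambda>u. E1 1 - (LBINT s=ereal 1..ereal u. exp (-s) / s)) has_real_derivative
      - (exp (-z) / z)) (at z)"
    by (auto intro!: derivative_eq_intros)
  have eq: "E1 1 - (LBINT s=ereal 1..ereal u. exp (-s) / s) = E1 u" if "u \<in> {0<..}" for u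
    using that E1_eq_E1_1_minus[of u] by simp
  show ?thesis
    by (rule has_field_derivative_transform_within_open[OF deriv open_greaterThan _ eq]) (use z in simp)
qed

lemma isCont_E1: "0 < z \<Longrightarrow> isCont E1 z"
  using E1_has_derivative DERIV_isCont by blast

lemma E1_le_ln: "0 < z \<Longrightarrow> z < 1 \<Longrightarrow> E1 z \<le> E1 1 - ln z"
proof -
  assume z: "0 < z" "z < 1"
  have "(LBINT s=ereal z..ereal 1. exp (-s) / s) \<le> (LBINT s=ereal z..ereal 1. 1 / s)"
  proof -
    have "set_integrable lborel {z<..<1} (\<lambda>s. exp (-s) / s)"
      and "set_integrable lborel {z<..<1} (\<lambda>s. 1 / s)"
      using interval_integrable_isCont[of z 1 "\<lambda>s. exp (-s) / s"]
        interval_integrable_isCont[of z 1 "\<lambda>s. 1 / s"] z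
      by (auto intro!: continuous_intros simp: interval_lebesgue_integrable_def)
    then show ?thesis using z
      by (simp add: interval_lebesgue_integral_le_eq)
        (rule set_integral_mono, auto intro!: divide_right_mono)
  qed
  also have "(LBINT s=ereal z..ereal 1. 1 / s) = ln 1 - ln z"
    using z by (intro interval_integral_FTC_finite)
      (auto intro!: continuous_intros derivative_eq_intros
        simp: has_real_derivative_iff_has_vector_derivative[symmetric])
  moreover have "E1 z = E1 1 + (LBINT s=ereal z..ereal 1. exp (-s) / s)"
    using E1_eq_E1_1_minus[OF z(1)] by (subst interval_integral_endpoints_reverse) simp
  ultimately show ?thesis by simp
qed

section \<open>The complementary error function\<close>

lemma gaussian_integrable_Ioi: "set_integrable lborel {0<..} (\<lambda>s::real. exp (-(s\<^sup>2)))"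
  and gaussian_integral_Ioi: "(LINT s:{0<..}|lborel. exp (-((s::real)\<^sup>2))) = sqrt pi / 2"
proof -
  have gauss: "has_bochner_integral lborel (\<lambda>s. indicator {0..} s *\<^sub>R exp (- s\<^sup>2)) (sqrt pi / 2)"
    by (rule gaussian_moment_0)
  then have "set_integrable lborel {0..} (\<lambda>s::real. exp (-(s\<^sup>2)))"
    unfolding set_integrable_def has_bochner_integral_iff by simp
  then show "set_integrable lborel {0<..} (\<lambda>s::real. exp (-(s\<^sup>2)))"
    by (rule set_integrable_subset) auto
  have "(LINT s:{0<..}|lborel. exp (-((s::real)\<^sup>2))) = (LINT s:{0..}|lborel. exp (-(s\<^sup>2)))"
    using AE_lborel_singleton[of 0]
    by (intro set_integral_cong_set) (auto simp: set_borel_measurable_def elim: eventually_mono)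
  also have "\<dots> = sqrt pi / 2"
    using gauss by (simp add: set_lebesgue_integral_def has_bochner_integral_integral_eq)
  finally show "(LINT s:{0<..}|lborel. exp (-((s::real)\<^sup>2))) = sqrt pi / 2" .
qed

lemma erfc_eq_1_minus_integral: "erfc u = 1 - 2 / sqrt pi * (LBINT s=ereal 0..ereal u. exp (-(s\<^sup>2)))"
proof -
  have "interval_lebesgue_integrable lborel (ereal a) (ereal b) (\<lambda>s. exp (-(s\<^sup>2)))" for a b
    by (intro interval_integrable_isCont) (auto intro!: continuous_intros)
  then have "interval_lebesgue_integrable lborel (min (ereal (-u)) (min (ereal 0) (ereal u)))
      (max (ereal (-u)) (max (ereal 0) (ereal u))) (\<lambda>s. exp (-(s\<^sup>2)))"
    by (simp add: min_def max_def)
  from interval_integral_sum[OF this]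
  have "(LBINT s=ereal (-u)..ereal u. exp (-(s\<^sup>2)))
      = (LBINT s=ereal (-u)..ereal 0. exp (-(s\<^sup>2))) + (LBINT s=ereal 0..ereal u. exp (-(s\<^sup>2)))"
    by simp
  also have "(LBINT s=ereal (-u)..ereal 0. exp (-(s\<^sup>2))) = (LBINT s=ereal 0..ereal u. exp (-(s\<^sup>2)))"
    by (subst interval_integral_reflect) simp
  finally show ?thesis unfolding erfc_def by simp
qed

lemma erfc_has_derivative: "(erfc has_real_derivative - 2 / sqrt pi * exp (-(x\<^sup>2))) (at x)"
proof -
  define a where "a = min 0 (x - 1)"
  define b where "b = max 0 (x + 1)"
  have ab: "a \<le> 0" "0 \<le> b" "a < x" "x < b" by (auto simp: a_def b_def)
  have "((\<lambda>u. LBINT s=ereal 0..ereal u. exp (-(s\<^sup>2))) has_vector_derivative exp (-(x\<^sup>2)))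
      (at x within {a..b})"
    using ab by (intro interval_integral_FTC2) (auto intro!: continuous_intros)
  then have "((\<lambda>u. LBINT s=ereal 0..ereal u. exp (-(s\<^sup>2))) has_real_derivative exp (-(x\<^sup>2))) (at x)"
    using ab by (simp add: at_within_Icc_at has_real_derivative_iff_has_vector_derivative)
  then show ?thesis
    unfolding erfc_eq_1_minus_integral[abs_def]
    by (auto intro!: derivative_eq_intros simp: field_simps real_sqrt_mult_self)
qed

lemma erfc_0 [simp]: "erfc 0 = 1"
  by (simp add: erfc_eq_1_minus_integral)

lemma erfc_le_1: "0 \<le> u \<Longrightarrow> erfc u \<le> 1"
  unfolding erfc_eq_1_minus_integral
  by (simp add: interval_lebesgue_integral_le_eq set_lebesgue_integral_def)

lemma erfc_eq_tail: "0 \<le> u \<Longrightarrow> erfc u = 2 / sqrt pi * (LINT s:{u<..}|lborel. exp (-(s\<^sup>2)))"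
proof -
  assume u: "0 \<le> u"
  have "interval_lebesgue_integrable lborel (min (ereal 0) (min (ereal u) \<infinity>))
      (max (ereal 0) (max (ereal u) \<infinity>)) (\<lambda>s. exp (-(s\<^sup>2)))"
    using u gaussian_integrable_Ioi by (simp add: interval_integrable_to_infinity_eq)
  from interval_integral_sum[OF this]
  have "(LBINT s=ereal 0..ereal u. exp (-(s\<^sup>2))) + (LINT s:{u<..}|lborel. exp (-(s\<^sup>2)))
      = sqrt pi / 2"
    by (simp add: interval_integral_to_infinity_eq gaussian_integral_Ioi)
  then show ?thesis
    by (simp add: erfc_eq_1_minus_integral field_simps)
qed

lemma erfc_nonneg: "0 \<le> u \<Longrightarrow> 0 \<le> erfc u"
  by (simp add: erfc_eq_tail set_lebesgue_integral_def integral_nonneg_AE)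

lemma gaussian_first_moment_Ioi:
  fixes u :: real
  assumes "0 \<le> u"
  shows "set_integrable lborel {u<..} (\<lambda>s. s * exp (-(s\<^sup>2)))"
    and "(LINT s:{u<..}|lborel. s * exp (-(s\<^sup>2))) = exp (-(u\<^sup>2)) / 2"
proof -
  have lim_u: "(((\<lambda>s. - exp (-(s\<^sup>2)) / 2) \<circ> real_of_ereal) \<longlongrightarrow> - exp (-(u\<^sup>2)) / 2) (at_right (ereal u))"
    unfolding ereal_tendsto_simps1 by (auto intro!: tendsto_intros)
  have lim_inf: "(((\<lambda>s. - exp (-(s\<^sup>2)) / 2) \<circ> real_of_ereal) \<longlongrightarrow> 0) (at_left \<infinity>)"
    unfolding ereal_tendsto_simps1 by real_asymp
  note FTC = interval_integral_FTC_nonneg[where f="\<lambda>s. s * exp (-(s\<^sup>2))", OF _ _ _ _ lim_u lim_inf]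
  have "set_integrable lborel (einterval u \<infinity>) (\<lambda>s. s * exp (-(s\<^sup>2)))"
    by (rule FTC(1)) (use assms in \<open>auto intro!: derivative_eq_intros\<close>)
  then show "set_integrable lborel {u<..} (\<lambda>s. s * exp (-(s\<^sup>2)))" by simp
  have "(LBINT s=ereal u..\<infinity>. s * exp (-(s\<^sup>2))) = 0 - (- exp (-(u\<^sup>2)) / 2)"
    by (rule FTC(2)) (use assms in \<open>auto intro!: derivative_eq_intros\<close>)
  then show "(LINT s:{u<..}|lborel. s * exp (-(s\<^sup>2))) = exp (-(u\<^sup>2)) / 2"
    by (simp add: interval_integral_to_infinity_eq)
qed

lemma gaussian_tail_le:
  fixes u :: real
  assumes "0 \<le> u"
  shows "u * (LINT s:{u<..}|lborel. exp (-(s\<^sup>2))) \<le> exp (-(u\<^sup>2)) / 2"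
proof -
  have tail_integrable: "set_integrable lborel {u<..} (\<lambda>s. exp (-(s\<^sup>2)))"
    by (rule set_integrable_subset[OF gaussian_integrable_Ioi]) (use assms in auto)
  have "u * (LINT s:{u<..}|lborel. exp (-(s\<^sup>2))) = (LINT s:{u<..}|lborel. u * exp (-(s\<^sup>2)))"
    by (rule set_integral_mult_right[symmetric])
  also have "\<dots> \<le> (LINT s:{u<..}|lborel. s * exp (-(s\<^sup>2)))"
    using tail_integrable gaussian_first_moment_Ioi(1)[OF assms]
    by (intro set_integral_mono set_integrable_mult_right) auto
  finally show ?thesis
    by (simp add: gaussian_first_moment_Ioi(2)[OF assms])
qed

lemma erfc_le_exp: "0 \<le> u \<Longrightarrow> u * erfc u \<le> exp (-(u\<^sup>2)) / sqrt pi"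
  using gaussian_tail_le[of u] by (simp add: erfc_eq_tail field_simps)

section \<open>The kernel profile\<close>

definition kern_profile :: "real \<Rightarrow> real" where
  "kern_profile u = erfc u - 1 / sqrt pi * u * E1 (u\<^sup>2)"

lemma isCont_E1_sq: "0 < u \<Longrightarrow> isCont (\<lambda>u. E1 (u\<^sup>2)) u"
  by (rule isCont_o2[OF _ isCont_E1]) auto

lemma kern_profile_has_derivative:
  "0 < u \<Longrightarrow> (kern_profile has_real_derivative - (E1 (u\<^sup>2) / sqrt pi)) (at u)"
proof -
  assume u: "0 < u"
  have "((\<lambda>u. E1 (u\<^sup>2)) has_real_derivative - (exp (-(u\<^sup>2)) / u\<^sup>2) * (2 * u)) (at u)"
    by (rule DERIV_chain2[OF E1_has_derivative]) (use u in \<open>auto intro!: derivative_eq_intros\<close>)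
  then have "(kern_profile has_real_derivative
      - 2 / sqrt pi * exp (-(u\<^sup>2)) - 1 / sqrt pi * (E1 (u\<^sup>2) + u * (- (exp (-(u\<^sup>2)) / u\<^sup>2) * (2 * u))))
      (at u)"
    unfolding kern_profile_def[abs_def] mult.assoc
    by (intro DERIV_diff DERIV_cmult erfc_has_derivative derivative_eq_intros) auto
  moreover have "- 2 / sqrt pi * exp (-(u\<^sup>2)) - 1 / sqrt pi * (E1 (u\<^sup>2) + u * (- (exp (-(u\<^sup>2)) / u\<^sup>2) * (2 * u)))
      = - (E1 (u\<^sup>2) / sqrt pi)"
    using u by (simp add: field_simps power2_eq_square)
  ultimately show ?thesis by simp
qed

lemma isCont_kern_profile: "0 < u \<Longrightarrow> isCont kern_profile u"
  using kern_profile_has_derivative DERIV_isCont by blast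

lemma kern_profile_le_1: "0 < u \<Longrightarrow> kern_profile u \<le> 1"
proof -
  assume u: "0 < u"
  then have "0 \<le> 1 / sqrt pi * u * E1 (u\<^sup>2)"
    using E1_nonneg[of "u\<^sup>2"] by simp
  with u erfc_le_1[of u] show ?thesis
    unfolding kern_profile_def by linarith
qed

lemma abs_kern_profile_le: "0 < u \<Longrightarrow> \<bar>kern_profile u\<bar> \<le> exp (-(u\<^sup>2)) / (u * sqrt pi)"
proof -
  assume u: "0 < u"
  have "0 \<le> erfc u" "erfc u \<le> exp (-(u\<^sup>2)) / (u * sqrt pi)"
    using u erfc_nonneg[of u] erfc_le_exp[of u] by (simp_all add: field_simps)
  moreover have "0 \<le> 1 / sqrt pi * u * E1 (u\<^sup>2)"
    using u E1_nonneg[of "u\<^sup>2"] by simp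
  moreover have "1 / sqrt pi * u * E1 (u\<^sup>2) \<le> 1 / sqrt pi * u * (exp (-(u\<^sup>2)) / u\<^sup>2)"
    using u E1_le[of "u\<^sup>2"] by (intro mult_left_mono) auto
  moreover have "1 / sqrt pi * u * (exp (-(u\<^sup>2)) / u\<^sup>2) = exp (-(u\<^sup>2)) / (u * sqrt pi)"
    using u by (simp add: field_simps power2_eq_square)
  ultimately show ?thesis
    unfolding kern_profile_def by linarith
qed

lemma tendsto_kern_profile_at_top: "(kern_profile \<longlongrightarrow> 0) at_top"
proof (rule Lim_null_comparison)
  show "\<forall>\<^sub>F u in at_top. norm (kern_profile u) \<le> exp (-(u\<^sup>2)) / (u * sqrt pi)"
    using eventually_gt_at_top[of 0] by eventually_elim (simp add: abs_kern_profile_le)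
  show "((\<lambda>u. exp (-(u\<^sup>2)) / (u * sqrt pi)) \<longlongrightarrow> 0) at_top"
    by real_asymp
qed

lemma tendsto_mult_E1_sq_at_right_0: "((\<lambda>u. u * E1 (u\<^sup>2)) \<longlongrightarrow> 0) (at_right 0)"
proof (rule tendsto_sandwich[where f="\<lambda>_. 0" and h="\<lambda>u. u * (E1 1 - 2 * ln u)"])
  have small: "\<forall>\<^sub>F u in at_right 0. 0 < u \<and> u < (1::real)"
    using eventually_at_right_real[of 0 1] by simp
  show "\<forall>\<^sub>F u in at_right 0. 0 \<le> u * E1 (u\<^sup>2)"
    using small by eventually_elim (simp add: E1_nonneg)
  show "\<forall>\<^sub>F u in at_right 0. u * E1 (u\<^sup>2) \<le> u * (E1 1 - 2 * ln u)"
    using small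
  proof eventually_elim
    case (elim u)
    then have "E1 (u\<^sup>2) \<le> E1 1 - ln (u\<^sup>2)"
      by (intro E1_le_ln) (auto simp: power_less_one_iff)
    then show ?case
      using elim by (intro mult_left_mono) (auto simp: ln_realpow)
  qed
qed (simp, real_asymp)

lemma tendsto_kern_profile_at_right_0: "(kern_profile \<longlongrightarrow> 1) (at_right 0)"
proof -
  have "(erfc \<longlongrightarrow> erfc 0) (at_right 0)"
    using erfc_has_derivative[THEN DERIV_isCont, of 0]
    by (simp add: isCont_def filterlim_at_split)
  then have "((\<lambda>u. erfc u - 1 / sqrt pi * (u * E1 (u\<^sup>2))) \<longlongrightarrow> 1 - 1 / sqrt pi * 0) (at_right 0)"
    by (intro tendsto_intros tendsto_mult_E1_sq_at_right_0) simp
  then show ?thesis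
    by (simp add: kern_profile_def[abs_def] mult.assoc)
qed

text \<open>The limit \<open>c\<close> is a hypothesis because at \<open>u = 0\<close> the definition of \<open>kern_profile\<close>
  involves the junk value \<open>E1 0\<close>.\<close>
lemma E1_sq_integral_Ioi:
  assumes "0 \<le> u" and lim: "(kern_profile \<longlongrightarrow> c) (at_right u)"
  shows "set_integrable lborel {u<..} (\<lambda>s. E1 (s\<^sup>2))"
    and "(LINT s:{u<..}|lborel. E1 (s\<^sup>2)) = sqrt pi * c"
proof -
  define F where "F s = - sqrt pi * kern_profile s" for s
  have lim_u: "((F \<circ> real_of_ereal) \<longlongrightarrow> - sqrt pi * c) (at_right (ereal u))"
    unfolding ereal_tendsto_simps1 F_def[abs_def] by (intro tendsto_intros lim)
  have lim_inf: "((F \<circ> real_of_ereal) \<longlongrightarrow> - sqrt pi * 0) (at_left \<infinity>)"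
    unfolding ereal_tendsto_simps1 F_def[abs_def] by (intro tendsto_intros tendsto_kern_profile_at_top)
  have "(F has_real_derivative - sqrt pi * - (E1 (x\<^sup>2) / sqrt pi)) (at x)" if "u < x" for x
    unfolding F_def[abs_def] using that assms(1)
    by (intro DERIV_cmult kern_profile_has_derivative) simp
  then have deriv: "(F has_real_derivative E1 (x\<^sup>2)) (at x)" if "u < x" for x
    using that by simp
  note FTC = interval_integral_FTC_nonneg[where F=F and f="\<lambda>s. E1 (s\<^sup>2)", OF _ _ _ _ lim_u lim_inf]
  have "set_integrable lborel (einterval u \<infinity>) (\<lambda>s. E1 (s\<^sup>2))"
    by (rule FTC(1)) (use assms(1) deriv in \<open>auto intro!: isCont_E1_sq E1_nonneg\<close>)
  then show "set_integrable lborel {u<..} (\<lambda>s. E1 (s\<^sup>2))" by simp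
  have "(LBINT s=ereal u..\<infinity>. E1 (s\<^sup>2)) = - sqrt pi * 0 - (- sqrt pi * c)"
    by (rule FTC(2)) (use assms(1) deriv in \<open>auto intro!: isCont_E1_sq E1_nonneg\<close>)
  then show "(LINT s:{u<..}|lborel. E1 (s\<^sup>2)) = sqrt pi * c"
    by (simp add: interval_integral_to_infinity_eq)
qed

lemma E1_sq_integrable_Ioi: "set_integrable lborel {0<..} (\<lambda>s. E1 (s\<^sup>2))"
  using E1_sq_integral_Ioi(1)[OF order_refl tendsto_kern_profile_at_right_0] .

lemma kern_profile_nonneg: "0 < u \<Longrightarrow> 0 \<le> kern_profile u"
proof -
  assume u: "0 < u"
  have "(kern_profile \<longlongrightarrow> kern_profile u) (at_right u)"
    using isCont_kern_profile[OF u] by (simp add: isCont_def filterlim_at_split)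
  from E1_sq_integral_Ioi(2)[OF less_imp_le[OF u] this]
  have "kern_profile u = (LINT s:{u<..}|lborel. E1 (s\<^sup>2)) / sqrt pi"
    by simp
  also have "\<dots> \<ge> 0"
    using u unfolding set_lebesgue_integral_def
    by (intro divide_nonneg_nonneg integral_nonneg_AE AE_I2) (auto intro!: E1_nonneg split: split_indicator)
  finally show ?thesis .
qed

lemma abs_kern_profile_le_exp: "0 < u \<Longrightarrow> \<bar>kern_profile u\<bar> \<le> exp 1 * exp (-(u\<^sup>2))"
proof (cases "u \<le> 1")
  case True
  assume u: "0 < u"
  with True have "1 \<le> exp 1 * exp (-(u\<^sup>2))"
    by (simp add: mult_exp_exp power_le_one)
  then show ?thesis
    using kern_profile_nonneg[OF u] kern_profile_le_1[OF u] by simp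
next
  case False
  assume u: "0 < u"
  have "1 \<le> sqrt pi"
    using pi_gt3 by simp
  then have "1 \<le> u * sqrt pi"
    using False mult_mono[of 1 u 1 "sqrt pi"] by simp
  then have "exp (-(u\<^sup>2)) / (u * sqrt pi) \<le> exp 1 * exp (-(u\<^sup>2))"
    using mult_mono[of 1 "exp 1" 1 "u * sqrt pi"] by (simp add: divide_le_eq)
  then show ?thesis
    using abs_kern_profile_le[OF u] by simp
qed

lemma kern_profile_integrable_Ioi: "set_integrable lborel {0<..} kern_profile"
proof (rule set_integrable_bound[where f="\<lambda>u. exp 1 * exp (-(u\<^sup>2))"])
  show "set_integrable lborel {0<..} (\<lambda>u::real. exp 1 * exp (-(u\<^sup>2)) :: real)"
    using gaussian_integrable_Ioi by simp
  show "set_borel_measurable lborel {0<..} kern_profile"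
    unfolding set_borel_measurable_def measurable_lborel2
    by (intro borel_measurable_continuous_on_indicator continuous_at_imp_continuous_on)
      (auto intro: isCont_kern_profile)
  show "AE u in lborel. u \<in> {0<..} \<longrightarrow> norm (kern_profile u) \<le> norm (exp 1 * exp (-(u\<^sup>2)))"
    by (intro AE_I2) (simp add: abs_kern_profile_le_exp)
qed

lemma kern_profile_cos_integral:
  "b * (LINT u:{0<..}|lborel. kern_profile u * cos (b * u))
    = (LINT u:{0<..}|lborel. E1 (u\<^sup>2) * sin (b * u)) / sqrt pi"
proof -
  have int_cos: "set_integrable lborel {0<..} (\<lambda>u. kern_profile u * cos (b * u))"
    by (intro set_integrable_mult_bounded kern_profile_integrable_Ioi) (auto intro!: continuous_intros)
  have int_sin: "set_integrable lborel {0<..} (\<lambda>u. E1 (u\<^sup>2) * sin (b * u))"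
    by (intro set_integrable_mult_bounded E1_sq_integrable_Ioi) (auto intro!: continuous_intros)
  define f where "f u = b * (kern_profile u * cos (b * u)) - E1 (u\<^sup>2) * sin (b * u) / sqrt pi" for u
  have "(LBINT u=ereal 0..\<infinity>. f u) = 0 - 0"
  proof (rule interval_integral_FTC_integrable[where F="\<lambda>u. kern_profile u * sin (b * u)"])
    fix x
    assume "ereal 0 < ereal x"
    then have x: "0 < x" by simp
    have "((\<lambda>u. kern_profile u * sin (b * u)) has_real_derivative
        - (E1 (x\<^sup>2) / sqrt pi) * sin (b * x) + kern_profile x * (cos (b * x) * b)) (at x)"
      using x by (auto intro!: derivative_eq_intros kern_profile_has_derivative)
    then show "((\<lambda>u. kern_profile u * sin (b * u)) has_vector_derivative f x) (at x)"
      by (simp add: f_def has_real_derivative_iff_has_vector_derivative[symmetric] algebra_simps)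
    show "isCont f x"
      unfolding f_def using x by (auto intro!: continuous_intros isCont_E1_sq isCont_kern_profile)
  next
    show "set_integrable lborel (einterval (ereal 0) \<infinity>) f"
      unfolding f_def using int_cos int_sin by (auto simp: set_integrable_divide)
    have "((\<lambda>u. kern_profile u * sin (b * u)) \<longlongrightarrow> 1 * sin (b * 0)) (at_right 0)"
      by (intro tendsto_intros tendsto_kern_profile_at_right_0)
    then show "(((\<lambda>u. kern_profile u * sin (b * u)) \<circ> real_of_ereal) \<longlongrightarrow> 0) (at_right (ereal 0))"
      unfolding ereal_tendsto_simps1 by simp
    have "((\<lambda>u. kern_profile u * sin (b * u)) \<longlongrightarrow> 0) at_top"
    proof (rule Lim_null_comparison)
      show "\<forall>\<^sub>F u in at_top. norm (kern_profile u * sin (b * u)) \<le> \<bar>kern_profile u\<bar>"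
        by (simp add: abs_mult mult_left_le)
      show "((\<lambda>u. \<bar>kern_profile u\<bar>) \<longlongrightarrow> 0) at_top"
        by (intro tendsto_rabs_zero tendsto_kern_profile_at_top)
    qed
    then show "(((\<lambda>u. kern_profile u * sin (b * u)) \<circ> real_of_ereal) \<longlongrightarrow> 0) (at_left \<infinity>)"
      unfolding ereal_tendsto_simps1 .
  qed simp
  moreover have "(LBINT u=ereal 0..\<infinity>. f u)
      = b * (LINT u:{0<..}|lborel. kern_profile u * cos (b * u))
        - (LINT u:{0<..}|lborel. E1 (u\<^sup>2) * sin (b * u)) / sqrt pi"
    using int_cos int_sin
    by (simp add: f_def interval_integral_to_infinity_eq set_integrable_divide)
  ultimately show ?thesis by simp
qed

section \<open>The Fourier transform of the kernel\<close>

lemma kern_even: "kern \<sigma> (-r) = kern \<sigma> r"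
  by (simp add: kern_def)

lemma kern_eq_kern_profile: "0 < r \<Longrightarrow> kern \<sigma> r = kern_profile (r / (\<sigma> * sqrt 2))"
  by (simp add: kern_def kern_profile_def power_divide power_mult_distrib mult.commute)

theorem theorem5:
  fixes \<sigma> t :: real
  assumes "\<sigma> > 0" and "t \<noteq> 0"
  shows "fourier (kern \<sigma>) t =
    complex_of_real (2 / (t * sqrt pi) *
      (LBINT r=0..\<infinity>. E1 (r\<^sup>2) * sin (\<sigma> * sqrt 2 * t * r)))"
proof -
  define a where "a = \<sigma> * sqrt 2"
  have a: "0 < a"
    using assms(1) by (simp add: a_def)
  have kern_scaled: "kern \<sigma> r = kern_profile (r / a)" if "r \<in> {0<..}" for r
    using that by (simp add: kern_eq_kern_profile a_def)
  have "set_integrable lborel {0<..} (kern \<sigma>) \<longleftrightarrow> set_integrable lborel {0<..} (\<lambda>r. kern_profile (r / a))"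
    by (rule set_integrable_cong) (simp_all add: kern_scaled)
  then have "set_integrable lborel {0<..} (kern \<sigma>)"
    using set_integral_Ioi_scale(1)[OF a] kern_profile_integrable_Ioi by simp
  then have "fourier (kern \<sigma>) t = complex_of_real (2 * (LINT r:{0<..}|lborel. kern \<sigma> r * cos (r * t)))"
    by (rule fourier_even) (rule kern_even)
  also have "(LINT r:{0<..}|lborel. kern \<sigma> r * cos (r * t))
      = (LINT r:{0<..}|lborel. kern_profile (r / a) * cos (a * t * (r / a)))"
    using a by (intro set_lebesgue_integral_cong) (auto simp: kern_scaled mult.commute)
  also have "\<dots> = a * (LINT u:{0<..}|lborel. kern_profile u * cos (a * t * u))"
    using a by (rule set_integral_Ioi_scale(2))
  also have "\<dots> = (LINT u:{0<..}|lborel. E1 (u\<^sup>2) * sin (a * t * u)) / (t * sqrt pi)"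
    using kern_profile_cos_integral[of "a * t"] assms(2) by (simp add: field_simps)
  finally show ?thesis
    by (simp add: a_def interval_lebesgue_integral_0_infty)
qed

end
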